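(* Let $d\geq 1$, let $p_1<p_2<\dots<p_d$ be the first $d$ prime numbers, let $N\geq 1$ be an integer, and let $C>1$ and $\sigma\in\mathbb{R}$. Let $\mathbf{S}_1$ be the $(d+1)\times d$ real matrix whose $i$-th column ($1\le i\le d$) has entry $\ln p_i$ in row $i$, entry $C\ln p_i$ in row $d+1$, and zeros elsewhere, and let $\mathbf{t}=(0,\dots,0,C\ln N)^T\in\mathbb{R}^{d+1}$. Let $\mathbf{z}=(z_1,\dots,z_d)\in\mathbb{Z}^{d}$ and put $$u=\prod_{1\le i\le d,\ z_i>0}p_i^{z_i},\qquad k=\prod_{1\le i\le d,\ z_i<0}p_i^{-z_i}.$$ If $$\|\mathbf{S}_1\mathbf{z}-\mathbf{t}\|_1\leq 2\ln C+2\sigma\ln p_d-\ln N,$$ then $|u-kN|\leq p_d^{\sigma}$.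
   Context: $\ln$ denotes the natural logarithm and $\|\cdot\|_1$ the $\ell^1$ norm on $\mathbb{R}^{d+1}$. Empty products equal $1$. *)

theory Defs
  imports Complex_Main "HOL-Library.Infinite_Set" "HOL-Computational_Algebra.Primes"
begin

text \<open>The i-th prime, 1-indexed: nth_prime 1 = 2, nth_prime 2 = 3, ...\<close>
definition nth_prime :: "nat \<Rightarrow> nat" where
  "nth_prime i = enumerate {q::nat. prime q} (i - 1)"

definition S1 :: "nat \<Rightarrow> real \<Rightarrow> nat \<Rightarrow> nat \<Rightarrow> real" where
  "S1 d C r j = (if r = j then ln (nth_prime j)
                 else if r = d + 1 then C * ln (nth_prime j) else 0)"

definition tvec :: "nat \<Rightarrow> real \<Rightarrow> nat \<Rightarrow> nat \<Rightarrow> real" where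
  "tvec d C N r = (if r = d + 1 then C * ln (real N) else 0)"

definition l1_dist :: "nat \<Rightarrow> real \<Rightarrow> nat \<Rightarrow> (nat \<Rightarrow> int) \<Rightarrow> real" where
  "l1_dist d C N z = (\<Sum>r=1..d+1. \<bar>(\<Sum>j=1..d. S1 d C r j * real_of_int (z j)) - tvec d C N r\<bar>)"

end

theory Submission imports Defs begin

text \<open>
  Write \<open>K = k N\<close>. Since \<open>S\<^sub>1 z\<close> has entries \<open>z\<^sub>i ln p\<^sub>i\<close> and \<open>C (ln u - ln k)\<close>, the
  hypothesis reads \<open>ln u + ln K + C \<bar>ln u - ln K\<bar> \<le> 2 ln C + 2 ln A\<close> with \<open>A = p\<^sub>d\<^sup>\<sigma>\<close>.
  For \<open>u \<ge> K\<close>, halving gives \<open>u (u/K)\<^sup>b \<le> C A\<close> with \<open>C = 1 + 2b\<close>, and \<open>u - K \<le> A\<close>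
  follows from \<open>(1 + 2b) (1 - s) s\<^sup>b \<le> 1\<close> at \<open>s = K/u\<close>: the left side is maximal at
  \<open>s = b/(1+b)\<close>, where the bound reduces to \<open>ln (1 + 1/b) \<ge> 1/(1+b)\<close>.
\<close>

lemma ln_one_minus_plus_mult_ln_le:
  fixes b s :: real
  assumes b: "b > 0" and s: "0 < s" "s < 1"
  shows "ln (1 - s) + b * ln s \<le> b * ln b - (b + 1) * ln (b + 1)"
proof -
  have "ln ((1 - s) * (b + 1)) \<le> (1 - s) * (b + 1) - 1"
    using s b by (intro ln_le_minus_one) auto
  then have first: "ln (1 - s) + ln (b + 1) \<le> (1 - s) * (b + 1) - 1"
    using s b by (simp add: ln_mult)
  have "b * ln (s * (b + 1) / b) \<le> b * (s * (b + 1) / b - 1)"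
    using s b by (intro mult_left_mono ln_le_minus_one) auto
  also have "\<dots> = s * (b + 1) - b"
    using b by (simp add: field_simps)
  also have "ln (s * (b + 1) / b) = ln s + ln (b + 1) - ln b"
    using s b by (simp add: ln_mult ln_div)
  finally have second: "b * ln s + b * ln (b + 1) - b * ln b \<le> s * (b + 1) - b"
    by (simp only: right_diff_distrib distrib_left)
  show ?thesis using first second by (simp add: algebra_simps)
qed

lemma ln_one_plus_two_mult_le:
  fixes b :: real
  assumes b: "b > 0"
  shows "ln (1 + 2 * b) \<le> (b + 1) * ln (b + 1) - b * ln b"
proof -
  have "ln (1 + b / (b + 1)) \<le> b / (b + 1)"
    using b by (intro ln_add_one_self_le_self) auto
  moreover have "1 + b / (b + 1) = (1 + 2 * b) / (b + 1)"
    using b by (simp add: field_simps)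
  ultimately have first: "ln (1 + 2 * b) - ln (b + 1) \<le> b / (b + 1)"
    using b by (simp add: ln_div)
  have "b * ln (b / (b + 1)) \<le> b * (b / (b + 1) - 1)"
    using b by (intro mult_left_mono ln_le_minus_one) auto
  then have second: "b * ln b - b * ln (b + 1) \<le> - (b / (b + 1))"
    using b by (simp add: ln_div field_simps)
  show ?thesis using first second by (simp add: algebra_simps)
qed

lemma abs_diff_le_of_ln_bound:
  fixes u K C A :: real
  assumes "u > 0" and "K > 0" and C: "C > 1" and "A > 0"
    and "ln u + ln K + C * \<bar>ln u - ln K\<bar> \<le> 2 * ln C + 2 * ln A"
  shows "\<bar>u - K\<bar> \<le> A"
  using assms
proof (induction u K rule: linorder_wlog)
  case (sym K u)
  then show ?case by (simp add: abs_minus_commute add.commute)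
next
  case (le K u)
  show ?case
  proof (cases "K = u")
    case True
    then show ?thesis using le by simp
  next
    case False
    define s where "s = K / u"
    define b where "b = (C - 1) / 2"
    have s: "0 < s" "s < 1" using le False by (auto simp: s_def)
    have b: "b > 0" using C by (simp add: b_def)
    have ln_s: "ln s = ln K - ln u" using le by (simp add: s_def ln_div)
    have "1 + 2 * b = C" by (simp add: b_def field_simps)
    then have "ln C + ln (1 - s) + b * (ln K - ln u) \<le> 0"
      using ln_one_minus_plus_mult_ln_le[OF b s] ln_one_plus_two_mult_le[OF b] ln_s by simp
    moreover have "ln u + ln K + C * (ln u - ln K) \<le> 2 * ln C + 2 * ln A"
      using le by simp
    then have "ln u + b * (ln u - ln K) \<le> ln C + ln A"
      by (simp add: b_def field_simps)
    moreover have "ln (u * (1 - s)) = ln u + ln (1 - s)"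
      using le s by (simp add: ln_mult)
    ultimately have "ln (u * (1 - s)) \<le> ln A"
      by (simp add: algebra_simps)
    then have "u * (1 - s) \<le> A" using le s by simp
    moreover have "u * (1 - s) = u - K" using le by (simp add: s_def field_simps)
    ultimately show ?thesis using le by simp
  qed
qed

lemma nth_prime_prime: "prime (nth_prime i)"
  unfolding nth_prime_def using enumerate_in_set[OF primes_infinite] by simp

lemma ln_nth_prime_nonneg: "ln (real (nth_prime i)) \<ge> 0"
  using prime_ge_1_nat[OF nth_prime_prime] by simp

definition pos_prime_prod :: "nat \<Rightarrow> (nat \<Rightarrow> int) \<Rightarrow> nat" where
  "pos_prime_prod d w = (\<Prod>i\<in>{i\<in>{1..d}. w i > 0}. nth_prime i ^ nat (w i))"

lemma pos_prime_prod_pos: "pos_prime_prod d w > 0"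
  unfolding pos_prime_prod_def using prime_gt_0_nat[OF nth_prime_prime] by (simp add: prod_pos)

lemma ln_pos_prime_prod:
  "ln (real (pos_prime_prod d w)) = (\<Sum>i=1..d. ln (real (nth_prime i)) * of_int (max (w i) 0))"
proof -
  have "ln (real (pos_prime_prod d w))
        = (\<Sum>i\<in>{i\<in>{1..d}. w i > 0}. ln (real (nth_prime i) ^ nat (w i)))"
    unfolding pos_prime_prod_def using prime_gt_0_nat[OF nth_prime_prime]
    by (simp add: ln_prod)
  also have "\<dots> = (\<Sum>i=1..d. ln (real (nth_prime i)) * of_int (max (w i) 0))"
    using prime_gt_0_nat[OF nth_prime_prime]
    by (subst sum.inter_filter) (auto simp: ln_realpow intro!: sum.cong)
  finally show ?thesis .
qed

lemma l1_dist_eq_ln_prime_prods: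
  assumes "C \<ge> 0"
  shows "l1_dist d C N z
    = ln (real (pos_prime_prod d z)) + ln (real (pos_prime_prod d (\<lambda>i. - z i)))
      + C * \<bar>ln (real (pos_prime_prod d z)) - ln (real (pos_prime_prod d (\<lambda>i. - z i))) - ln N\<bar>"
proof -
  define x where "x j = ln (real (nth_prime j)) * of_int (z j)" for j
  have row: "(\<Sum>j=1..d. S1 d C r j * of_int (z j)) = x r" if "r \<in> {1..d}" for r
    using that by (simp add: S1_def x_def if_distrib[of "\<lambda>a. a * _"] sum.delta cong: if_cong)
  have last_row: "(\<Sum>j=1..d. S1 d C (d + 1) j * of_int (z j)) = C * (\<Sum>j=1..d. x j)"
    by (simp add: S1_def x_def sum_distrib_left mult.assoc)
  have "l1_dist d C N z = (\<Sum>r=1..d. \<bar>x r\<bar>) + C * \<bar>(\<Sum>j=1..d. x j) - ln N\<bar>"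
    using row last_row assms
    by (simp add: l1_dist_def sum.cl_ivl_Suc tvec_def abs_mult right_diff_distrib[symmetric])
  moreover have "\<bar>x j\<bar> = ln (real (nth_prime j)) * of_int (max (z j) 0)
                       + ln (real (nth_prime j)) * of_int (max (- z j) 0)" for j
    using ln_nth_prime_nonneg[of j] by (cases "z j \<ge> 0") (simp_all add: x_def abs_mult)
  moreover have "x j = ln (real (nth_prime j)) * of_int (max (z j) 0)
                     - ln (real (nth_prime j)) * of_int (max (- z j) 0)" for j
    by (cases "z j \<ge> 0") (simp_all add: x_def)
  ultimately show ?thesis
    by (simp add: ln_pos_prime_prod sum.distrib sum_subtractf)
qed

theorem theorem2:
  fixes d N :: nat and C \<sigma> :: real and z :: "nat \<Rightarrow> int"
  assumes "d \<ge> 1" and "N \<ge> 1" and "C > 1"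
    and "l1_dist d C N z \<le> 2 * ln C + 2 * \<sigma> * ln (nth_prime d) - ln N"
  shows "\<bar>real (\<Prod>i\<in>{i\<in>{1..d}. z i > 0}. nth_prime i ^ nat (z i))
           - real (\<Prod>i\<in>{i\<in>{1..d}. z i < 0}. nth_prime i ^ nat (- z i)) * real N\<bar>
         \<le> real (nth_prime d) powr \<sigma>"
proof -
  define u where "u = real (pos_prime_prod d z)"
  define k where "k = real (pos_prime_prod d (\<lambda>i. - z i))"
  define A where "A = real (nth_prime d) powr \<sigma>"
  have pos: "u > 0" "k > 0" "real N > 0" "A > 0"
    using pos_prime_prod_pos assms(2) prime_gt_0_nat[OF nth_prime_prime]
    by (auto simp: u_def k_def A_def)
  have "ln A = \<sigma> * ln (nth_prime d)"
    using prime_gt_0_nat[OF nth_prime_prime] by (simp add: A_def ln_powr)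
  then have "ln u + ln (k * N) + C * \<bar>ln u - ln (k * N)\<bar> \<le> 2 * ln C + 2 * ln A"
    using assms(4) l1_dist_eq_ln_prime_prods[of C d N z] assms(3) pos
    by (simp add: u_def k_def ln_mult algebra_simps)
  then have "\<bar>u - k * N\<bar> \<le> A"
    using abs_diff_le_of_ln_bound assms(3) pos by simp
  then show ?thesis by (simp add: u_def k_def A_def pos_prime_prod_def)
qed

end
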